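(* In the setting below, fix a test query $\mathbf q\in\mathbb{R}^d$, a stopping step $\hat N\ge1$ and two tokens $h,h'\in\mathcal H$. Suppose that there exist a vector $\boldsymbol\mu^{(0)}$ (the common initialization, $\boldsymbol\mu^{(0)}_g=\boldsymbol\mu^{(0)}$ for all $g$), vectors $\mathbf r_h,\mathbf r_{h'}$ and $\xi\ge0$ with $\|\mathbf r_h\|,\|\mathbf r_{h'}\|\le\xi$ such that $$\mathbb E\big[\boldsymbol\mu^{(\hat N)}_g\big]=\boldsymbol\mu^{(0)}+\frac{\eta\hat N p_g}{\sqrt d}(\mathbf w_g-\bar{\mathbf w})+\mathbf r_g\qquad (g\in\{h,h'\}).$$ Define $$\mathrm{AR}(h,h')=\frac{\mathbb E\big[M_h(\mathbf q;\boldsymbol\mu^{(\hat N)})/M_{h'}(\mathbf q;\boldsymbol\mu^{(\hat N)})\big]}{p_h/p_{h'}},$$ the expectation being over the training randomness. Then $$\mathrm{AR}(h,h')\ \ge\ \exp\Big(\frac{\eta\hat N}{d}\big\langle\mathbf q,\ p_h(\mathbf w_h-\bar{\mathbf w})-p_{h'}(\mathbf w_{h'}-\bar{\mathbf w})\big\rangle-\frac{2\xi\|\mathbf q\|}{\sqrt d}\Big).$$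
   Context: Let $\mathcal H$ be a finite set of tokens and $T\ge1$. Each history position $j\in[T]$ carries a token $h_j\in\mathcal H$; let $S_h=\{j\in[T]:h_j=h\}$, assume $|S_h|\ge1$ for all $h$, and let $p_h=|S_h|/T$. Each token $h$ has a key parameter $\boldsymbol\mu_h\in\mathbb{R}^d$, and the token exposure for a query $\mathbf q\in\mathbb{R}^d$ is $M_h(\mathbf q;\boldsymbol\mu)=\frac{|S_h|\exp(\langle\mathbf q,\boldsymbol\mu_h\rangle/\sqrt d)}{\sum_{h''\in\mathcal H}|S_{h''}|\exp(\langle\mathbf q,\boldsymbol\mu_{h''}\rangle/\sqrt d)}$. Training pairs $(\mathbf q^{(n)},X^{(n)})_{n\ge0}$ are i.i.d., with $\|\mathbf q^{(n)}\|\le B_q$ almost surely, $\Pr(X^{(n)}=h)=p_h$, $\mathbf w_h=\mathbb E[\mathbf q^{(n)}\mid X^{(n)}=h]$ and $\bar{\mathbf w}=\sum_h p_h\mathbf w_h$. The parameters $\boldsymbol\mu^{(n)}$ are produced by SGD with learning rate $\eta>0$ on the loss $-\log M_{X^{(n)}}(\mathbf q^{(n)};\boldsymbol\mu^{(n)})$, starting from a common initialization; $\boldsymbol\mu^{(\hat N)}$ is the (random) iterate at step $\hat N$. *)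

theory Defs
  imports "HOL-Probability.Probability"
begin

text \<open>Vectors in R^d are modelled as real^'d, with d = CARD('d).
  Tokens form a finite type 'h. The history is hist :: nat => 'h on positions 1..T.\<close>

definition token_count :: "(nat \<Rightarrow> 'h) \<Rightarrow> nat \<Rightarrow> 'h \<Rightarrow> nat" where
  "token_count hist T g = card {j \<in> {1..T}. hist j = g}"

definition token_freq :: "(nat \<Rightarrow> 'h) \<Rightarrow> nat \<Rightarrow> 'h \<Rightarrow> real" where
  "token_freq hist T g = real (token_count hist T g) / real T"

text \<open>Token exposure M_h(q; mu), with c g = |S_g|.\<close>
definition exposure :: "('h::finite \<Rightarrow> nat) \<Rightarrow> real^'d \<Rightarrow> ('h \<Rightarrow> real^'d) \<Rightarrow> 'h \<Rightarrow> real" where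
  "exposure c q mu g =
     real (c g) * exp ((q \<bullet> mu g) / sqrt (real CARD('d))) /
     (\<Sum>g''\<in>UNIV. real (c g'') * exp ((q \<bullet> mu g'') / sqrt (real CARD('d))))"

text \<open>One SGD step with learning rate eta on the loss -log M_x(q; mu).
  The gradient of this loss w.r.t. mu_g is -(1/sqrt d) ([g = x] - M_g(q;mu)) q.\<close>
definition sgd_step :: "real \<Rightarrow> ('h::finite \<Rightarrow> nat) \<Rightarrow> ('h \<Rightarrow> real^'d) \<Rightarrow> real^'d \<Rightarrow> 'h
    \<Rightarrow> ('h \<Rightarrow> real^'d)" where
  "sgd_step eta c mu q x = (\<lambda>g. mu g - eta *\<^sub>R
      (- ((1 / sqrt (real CARD('d))) * ((if g = x then 1 else 0) - exposure c q mu g)) *\<^sub>R q))"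

fun sgd_iter :: "real \<Rightarrow> ('h::finite \<Rightarrow> nat) \<Rightarrow> ('h \<Rightarrow> real^'d) \<Rightarrow> (nat \<Rightarrow> real^'d)
    \<Rightarrow> (nat \<Rightarrow> 'h) \<Rightarrow> nat \<Rightarrow> ('h \<Rightarrow> real^'d)" where
  "sgd_iter eta c mu0 qs xs 0 = mu0"
| "sgd_iter eta c mu0 qs xs (Suc n) = sgd_step eta c (sgd_iter eta c mu0 qs xs n) (qs n) (xs n)"

text \<open>w_g = E[q | X = g] (computed from the pair at step 0; all pairs are identically distributed).\<close>
definition cond_mean :: "'w measure \<Rightarrow> ('w \<Rightarrow> real^'d) \<Rightarrow> ('w \<Rightarrow> 'h) \<Rightarrow> 'h \<Rightarrow> real^'d" where
  "cond_mean M Q0 X0 g =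
     (1 / measure M {\<omega> \<in> space M. X0 \<omega> = g}) *\<^sub>R
     (\<integral>\<omega>. indicator {\<omega> \<in> space M. X0 \<omega> = g} \<omega> *\<^sub>R Q0 \<omega> \<partial>M)"

end

theory Submission
  imports Defs
begin

text \<open>The common normalisation of the softmax cancels in the exposure ratio, and the counts
  cancel against \<open>p\<^sub>h / p\<^sub>h'\<close>, so \<open>AR(h, h')\<close> is the expectation of \<open>exp Y\<close> with
  \<open>Y = \<langle>q, \<mu>\<^sub>h - \<mu>\<^sub>h'\<rangle> / \<surd>d\<close>. Jensen's inequality for the convex function \<open>exp\<close> bounds it
  below by \<open>exp (E Y)\<close>, and \<open>E Y\<close> is read off from the assumed means, the remainders
  contributing at least \<open>-2 \<xi> \<parallel>q\<parallel> / \<surd>d\<close> by Cauchy-Schwarz. Integrability holds because each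
  SGD step moves a key by at most \<open>\<eta> B\<^sub>q / \<surd>d\<close>.\<close>

lemma exposure_nonneg:
  fixes c :: "'h::finite \<Rightarrow> nat" and q :: "real^'d"
  shows "0 \<le> exposure c q mu g"
  unfolding exposure_def by (intro divide_nonneg_nonneg sum_nonneg) auto

lemma exposure_le_one:
  fixes c :: "'h::finite \<Rightarrow> nat" and q :: "real^'d"
  shows "exposure c q mu g \<le> 1"
proof -
  let ?f = "\<lambda>g. real (c g) * exp ((q \<bullet> mu g) / sqrt (real CARD('d)))"
  have "?f g \<le> sum ?f UNIV"
    by (rule member_le_sum) auto
  moreover have "0 \<le> sum ?f UNIV"
    by (intro sum_nonneg) auto
  ultimately show ?thesis
    unfolding exposure_def by (auto simp: divide_le_eq_1)
qed

lemma exposure_ratio: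
  fixes c :: "'h::finite \<Rightarrow> nat" and q :: "real^'d"
  assumes "c g' > 0"
  shows "exposure c q mu g / exposure c q mu g' =
     real (c g) / real (c g') * exp ((q \<bullet> mu g - q \<bullet> mu g') / sqrt (real CARD('d)))"
proof -
  let ?f = "\<lambda>g. real (c g) * exp ((q \<bullet> mu g) / sqrt (real CARD('d)))"
  have "0 < ?f g'"
    using assms by simp
  also have "?f g' \<le> sum ?f UNIV"
    by (rule member_le_sum) auto
  finally have "sum ?f UNIV \<noteq> 0"
    by simp
  then have "exposure c q mu g / exposure c q mu g' = ?f g / ?f g'"
    by (simp add: exposure_def)
  also have "\<dots> = real (c g) / real (c g') * exp ((q \<bullet> mu g - q \<bullet> mu g') / sqrt (real CARD('d)))"
    using assms by (simp add: diff_divide_distrib exp_diff)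
  finally show ?thesis .
qed

lemma token_freq_ratio:
  "token_freq hist T g / token_freq hist T g' = real (token_count hist T g) / real (token_count hist T g')"
  by (cases "T = 0") (simp_all add: token_freq_def token_count_def)

lemma norm_sgd_step_diff_le:
  fixes q :: "real^'d"
  assumes "eta \<ge> 0"
  shows "norm (sgd_step eta c mu q x g - mu g) \<le> eta / sqrt (real CARD('d)) * norm q"
proof -
  let ?e = "(if g = x then 1 else 0) - exposure c q mu g"
  have "\<bar>?e\<bar> \<le> 1"
    using exposure_nonneg[of c q mu g] exposure_le_one[of c q mu g] by auto
  then have "eta * \<bar>?e\<bar> * norm q \<le> eta * 1 * norm q"
    using assms by (intro mult_right_mono mult_left_mono) auto
  then show ?thesis
    using assms by (simp add: sgd_step_def abs_mult divide_right_mono)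
qed

lemma norm_sgd_iter_le:
  fixes qs :: "nat \<Rightarrow> real^'d"
  assumes "\<And>n. norm (qs n) \<le> B" "eta \<ge> 0"
  shows "norm (sgd_iter eta c mu0 qs xs N g)
           \<le> norm (mu0 g) + real N * (eta / sqrt (real CARD('d)) * B)"
proof (induction N arbitrary: g)
  case 0
  then show ?case by simp
next
  case (Suc N)
  let ?mu = "sgd_iter eta c mu0 qs xs N"
  have "eta / sqrt (real CARD('d)) * norm (qs N) \<le> eta / sqrt (real CARD('d)) * B"
    using assms by (intro mult_left_mono) auto
  then have "norm (sgd_step eta c ?mu (qs N) (xs N) g - ?mu g) \<le> eta / sqrt (real CARD('d)) * B"
    using norm_sgd_step_diff_le[OF assms(2)] order_trans by blast
  then have "norm (sgd_step eta c ?mu (qs N) (xs N) g) \<le> norm (?mu g) + eta / sqrt (real CARD('d)) * B"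
    using norm_triangle_sub[of "sgd_step eta c ?mu (qs N) (xs N) g" "?mu g"] by linarith
  then show ?case
    using Suc[of g] by (simp add: algebra_simps add_divide_distrib)
qed

lemma AE_norm_sgd_iter_le:
  fixes Q :: "nat \<Rightarrow> 'w \<Rightarrow> real^'d"
  assumes "\<forall>n. AE \<omega> in M. norm (Q n \<omega>) \<le> B" "eta \<ge> 0"
  shows "AE \<omega> in M. norm (sgd_iter eta c mu0 (\<lambda>n. Q n \<omega>) (\<lambda>n. X n \<omega>) N g)
           \<le> norm (mu0 g) + real N * (eta / sqrt (real CARD('d)) * B)"
proof -
  have "AE \<omega> in M. \<forall>n. norm (Q n \<omega>) \<le> B"
    using assms(1) by (simp add: AE_all_countable)
  then show ?thesis
    by eventually_elim (metis norm_sgd_iter_le assms(2))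
qed

lemma measurable_sgd_iter:
  fixes Q :: "nat \<Rightarrow> 'w \<Rightarrow> real^'d" and X :: "nat \<Rightarrow> 'w \<Rightarrow> 'h::finite"
  assumes "\<And>n. Q n \<in> borel_measurable M" "\<And>n. X n \<in> M \<rightarrow>\<^sub>M count_space UNIV"
  shows "(\<lambda>\<omega>. sgd_iter eta c mu0 (\<lambda>n. Q n \<omega>) (\<lambda>n. X n \<omega>) N g) \<in> borel_measurable M"
proof (induction N arbitrary: g)
  case 0
  then show ?case by simp
next
  case (Suc N)
  have "Measurable.pred M (\<lambda>\<omega>. g = X N \<omega>)"
    using assms(2)[of N] by measurable
  then show ?case
    unfolding sgd_iter.simps sgd_step_def exposure_def
    using Suc assms(1)[of N] by measurable
qed

lemma (in finite_measure) integrable_exp_scaled_inner_diff: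
  fixes f f' :: "'a \<Rightarrow> 'b::euclidean_space"
  assumes "f \<in> borel_measurable M" "f' \<in> borel_measurable M"
    and "AE x in M. norm (f x) \<le> K" "AE x in M. norm (f' x) \<le> K"
  shows "integrable M (\<lambda>x. exp ((q \<bullet> f x - q \<bullet> f' x) / s))"
proof (rule integrable_const_bound)
  show "(\<lambda>x. exp ((q \<bullet> f x - q \<bullet> f' x) / s)) \<in> borel_measurable M"
    using assms(1,2) by measurable
  show "AE x in M. norm (exp ((q \<bullet> f x - q \<bullet> f' x) / s)) \<le> exp (norm q * (K + K) / \<bar>s\<bar>)"
    using assms(3,4)
  proof eventually_elim
    case (elim x)
    have "(q \<bullet> f x - q \<bullet> f' x) / s \<le> \<bar>q \<bullet> (f x - f' x)\<bar> / \<bar>s\<bar>"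
      by (metis abs_divide abs_ge_self inner_diff_right)
    also have "\<dots> \<le> norm q * norm (f x - f' x) / \<bar>s\<bar>"
      by (intro divide_right_mono Cauchy_Schwarz_ineq2) auto
    also have "\<dots> \<le> norm q * (K + K) / \<bar>s\<bar>"
      using elim norm_triangle_ineq4[of "f x" "f' x"] by (intro divide_right_mono mult_left_mono) auto
    finally have "(q \<bullet> f x - q \<bullet> f' x) / s \<le> norm q * (K + K) / \<bar>s\<bar>" .
    then show ?case
      by simp
  qed
qed

lemma inner_shifted_diff_ge:
  fixes q m u v r r' :: "'a::real_inner"
  assumes "d > 0" "norm r \<le> xi" "norm r' \<le> xi"
  shows "k / d * (q \<bullet> (a *\<^sub>R u - b *\<^sub>R v)) - 2 * xi * norm q / sqrt d
           \<le> (q \<bullet> (m + (k * a / sqrt d) *\<^sub>R u + r) - q \<bullet> (m + (k * b / sqrt d) *\<^sub>R v + r')) / sqrt d"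
proof -
  have "\<bar>q \<bullet> r\<bar> \<le> xi * norm q" "\<bar>q \<bullet> r'\<bar> \<le> xi * norm q"
    using Cauchy_Schwarz_ineq2[of q] assms(2,3) mult_left_mono[OF _ norm_ge_zero[of q]]
    by (smt (verit) mult.commute)+
  then have "- 2 * xi * norm q / sqrt d \<le> (q \<bullet> r - q \<bullet> r') / sqrt d"
    using assms(1) by (intro divide_right_mono) (auto simp: abs_le_iff)
  moreover have "(q \<bullet> (m + (k * a / sqrt d) *\<^sub>R u + r) - q \<bullet> (m + (k * b / sqrt d) *\<^sub>R v + r')) / sqrt d
      = k / (sqrt d * sqrt d) * (q \<bullet> (a *\<^sub>R u - b *\<^sub>R v)) + (q \<bullet> r - q \<bullet> r') / sqrt d"
    by (simp add: inner_add_right inner_diff_right add_divide_distrib diff_divide_distrib algebra_simps)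
  moreover have "sqrt d * sqrt d = d"
    using assms(1) by simp
  ultimately show ?thesis
    by simp
qed

theorem proposition2:
  fixes M :: "'w measure"
    and Q :: "nat \<Rightarrow> 'w \<Rightarrow> real^'d"
    and X :: "nat \<Rightarrow> 'w \<Rightarrow> 'h::finite"
    and hist :: "nat \<Rightarrow> 'h" and T :: nat
    and eta Bq xi :: real and Nhat :: nat
    and q mu0 :: "real^'d" and r :: "'h \<Rightarrow> real^'d" and h h' :: 'h
  defines "c \<equiv> token_count hist T"
    and "p \<equiv> token_freq hist T"
    and "w \<equiv> cond_mean M (Q 0) (X 0)"
    and "d \<equiv> real CARD('d)"
  defines "wbar \<equiv> (\<Sum>g\<in>UNIV. p g *\<^sub>R w g)"
    and "mu \<equiv> (\<lambda>\<omega>. sgd_iter eta c (\<lambda>_. mu0) (\<lambda>n. Q n \<omega>) (\<lambda>n. X n \<omega>) Nhat)"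
  assumes M: "prob_space M"
    and T: "T \<ge> 1"
    and S_nonempty: "\<forall>g. c g \<ge> 1"
    and eta: "eta > 0"
    and indep: "prob_space.indep_vars M (\<lambda>_. borel \<Otimes>\<^sub>M count_space UNIV)
                  (\<lambda>n \<omega>. (Q n \<omega>, X n \<omega>)) UNIV"
    and ident: "\<forall>n. distr M (borel \<Otimes>\<^sub>M count_space UNIV) (\<lambda>\<omega>. (Q n \<omega>, X n \<omega>))
                   = distr M (borel \<Otimes>\<^sub>M count_space UNIV) (\<lambda>\<omega>. (Q 0 \<omega>, X 0 \<omega>))"
    and bounded: "\<forall>n. AE \<omega> in M. norm (Q n \<omega>) \<le> Bq"
    and probX: "\<forall>n g. measure M {\<omega> \<in> space M. X n \<omega> = g} = p g"
    and Nhat: "Nhat \<ge> 1"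
    and xi: "xi \<ge> 0" "norm (r h) \<le> xi" "norm (r h') \<le> xi"
    and mean: "\<forall>g\<in>{h, h'}. (\<integral>\<omega>. mu \<omega> g \<partial>M)
                 = mu0 + (eta * real Nhat * p g / sqrt d) *\<^sub>R (w g - wbar) + r g"
  shows "(\<integral>\<omega>. exposure c q (mu \<omega>) h / exposure c q (mu \<omega>) h' \<partial>M) / (p h / p h')
         \<ge> exp (eta * real Nhat / d * (q \<bullet> (p h *\<^sub>R (w h - wbar) - p h' *\<^sub>R (w h' - wbar)))
                - 2 * xi * norm q / sqrt d)"
proof -
  interpret prob_space M by (rule M)
  have QX_meas: "(\<lambda>\<omega>. (Q n \<omega>, X n \<omega>)) \<in> M \<rightarrow>\<^sub>M borel \<Otimes>\<^sub>M count_space UNIV" for n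
    using indep unfolding indep_vars_def by auto
  have mu_meas: "(\<lambda>\<omega>. mu \<omega> g) \<in> borel_measurable M" for g
    unfolding mu_def using measurable_compose[OF QX_meas measurable_fst]
      measurable_compose[OF QX_meas measurable_snd] by (intro measurable_sgd_iter) auto
  define K where "K = norm mu0 + real Nhat * (eta / sqrt d * Bq)"
  have mu_bound: "AE \<omega> in M. norm (mu \<omega> g) \<le> K" for g
    unfolding mu_def K_def d_def
    using AE_norm_sgd_iter_le[OF bounded, of eta c "\<lambda>_. mu0" X Nhat g] eta by simp
  define Y where "Y \<omega> = (q \<bullet> mu \<omega> h - q \<bullet> mu \<omega> h') / sqrt d" for \<omega>
  have mu_int: "integrable M (\<lambda>\<omega>. mu \<omega> g)" for g
    using integrable_const_bound[OF mu_bound mu_meas] .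
  then have Y_int: "integrable M Y"
    unfolding Y_def by auto
  have expY_int: "integrable M (\<lambda>\<omega>. exp (Y \<omega>))"
    unfolding Y_def by (rule integrable_exp_scaled_inner_diff[OF mu_meas mu_meas mu_bound mu_bound])
  have AR_eq: "(\<integral>\<omega>. exposure c q (mu \<omega>) h / exposure c q (mu \<omega>) h' \<partial>M) / (p h / p h')
      = expectation (\<lambda>\<omega>. exp (Y \<omega>))"
    using S_nonempty unfolding Y_def d_def p_def c_def
    by (simp add: exposure_ratio token_freq_ratio Suc_le_eq)
  have "eta * real Nhat / d * (q \<bullet> (p h *\<^sub>R (w h - wbar) - p h' *\<^sub>R (w h' - wbar)))
      - 2 * xi * norm q / sqrt d \<le> expectation Y"
    using inner_shifted_diff_ge[OF _ xi(2,3)] mean mu_int unfolding Y_def d_def by simp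
  then have "exp (eta * real Nhat / d * (q \<bullet> (p h *\<^sub>R (w h - wbar) - p h' *\<^sub>R (w h' - wbar)))
      - 2 * xi * norm q / sqrt d) \<le> exp (expectation Y)"
    by simp
  also have "\<dots> \<le> expectation (\<lambda>\<omega>. exp (Y \<omega>))"
    using jensens_inequality[OF Y_int _ _ expY_int exp_convex] by simp
  finally show ?thesis
    unfolding AR_eq .
qed

end
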